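(* Let $\lambda$ be the smallest cardinal $\kappa$ with $2^\kappa>\mathfrak{c}$. For every free ultrafilter $\mathcal{F}$ on $\mathbb{Z}$ there is a chain $\mathcal{K}\subset\mathcal{L}_0$ with $|\mathcal{K}|=2^\lambda$ such that $\tau[\mathcal{F}]\subset\tau$ for every $\tau\in\mathcal{K}$.
   Context: $\mathfrak{c}=|\mathbb{R}|$. $\eta$ denotes the Euclidean topology on $\mathbb{R}$. $\mathcal{L}$ denotes the family of all Hausdorff topologies $\tau$ on $\mathbb{R}$ with $\tau\subset\eta$. For $\tau\in\mathcal{L}$ and $a\in\mathbb{R}$ let $\mathcal{N}_\tau(a)$ be the neighborhood filter of $a$; let $C(\tau)$ be the set of all $a$ with $\mathcal{N}_\tau(a)\neq\mathcal{N}_\eta(a)$. $\mathcal{L}_0:=\{\tau\in\mathcal{L}\mid C(\tau)\subset\{0\}\}$. For a free ultrafilter $\mathcal{F}$ on $\mathbb{Z}$, $\tau[\mathcal{F}]$ is the topology on $\mathbb{R}$ in which $U\subset\mathbb{R}$ is open iff $U$ is Euclidean open and ($0\notin U$ or $U\cap\mathbb{Z}\in\mathcal{F}$). A chain is a family of topologies totally ordered by inclusion. *)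

theory Defs
  imports "HOL-Analysis.Analysis" "HOL-Library.Equipollence"
begin

definition topo_le :: "'a topology \<Rightarrow> 'a topology \<Rightarrow> bool" where
  "topo_le \<sigma> \<tau> \<longleftrightarrow> (\<forall>U. openin \<sigma> U \<longrightarrow> openin \<tau> U)"

definition coarser_Hausdorff :: "real topology set" where
  "coarser_Hausdorff = {\<tau>. topspace \<tau> = UNIV \<and> Hausdorff_space \<tau> \<and> topo_le \<tau> euclidean}"

definition nbhds :: "'a topology \<Rightarrow> 'a \<Rightarrow> 'a set set" where
  "nbhds \<tau> a = {V. \<exists>U. openin \<tau> U \<and> a \<in> U \<and> U \<subseteq> V}"

definition C_set :: "real topology \<Rightarrow> real set" where
  "C_set \<tau> = {a. nbhds \<tau> a \<noteq> nbhds euclidean a}"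

definition L0 :: "real topology set" where
  "L0 = {\<tau> \<in> coarser_Hausdorff. C_set \<tau> \<subseteq> {0}}"

definition free_ultrafilter_on :: "'a set set \<Rightarrow> bool" where
  "free_ultrafilter_on F \<longleftrightarrow>
     UNIV \<in> F \<and> {} \<notin> F \<and>
     (\<forall>A B. A \<in> F \<longrightarrow> A \<subseteq> B \<longrightarrow> B \<in> F) \<and>
     (\<forall>A B. A \<in> F \<longrightarrow> B \<in> F \<longrightarrow> A \<inter> B \<in> F) \<and>
     (\<forall>A. A \<in> F \<or> - A \<in> F) \<and>
     (\<forall>x. {x} \<notin> F)"

definition tauF :: "int set set \<Rightarrow> real topology" where
  "tauF F = topology (\<lambda>U. open U \<and> (0 \<notin> U \<or> {n::int. real_of_int n \<in> U} \<in> F))"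

definition is_chain_topo :: "'a topology set \<Rightarrow> bool" where
  "is_chain_topo K \<longleftrightarrow> (\<forall>\<sigma>\<in>K. \<forall>\<tau>\<in>K. topo_le \<sigma> \<tau> \<or> topo_le \<tau> \<sigma>)"

text \<open>S has cardinality lambda = least kappa with 2^kappa > c. Since lambda \<le> c,
  it suffices to test against subsets of R.\<close>
definition lambda_set :: "real set \<Rightarrow> bool" where
  "lambda_set S \<longleftrightarrow> \<not> (Pow S \<lesssim> (UNIV::real set)) \<and>
     (\<forall>T \<subseteq> (UNIV::real set). T \<prec> S \<longrightarrow> Pow T \<lesssim> (UNIV::real set))"

end

theory Submission
  imports Defs
begin

text \<open>For q \<in> [0,1) let x_q be a null sequence, the ranges of different x_q being disjoint.
  For A \<subseteq> [0,1) let \<tau>_A consist of the Euclidean open U such that, if 0 \<in> U, then for every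
  q \<notin> A the integers n with n + x_q(k) \<in> U for all large k form a set in F. Every topology
  between \<tau>[F] and the Euclidean one lies in L0, and \<tau>_A is such a topology. The map
  A \<mapsto> \<tau>_A is monotone and injective, since the complement of the closed set
  (\<int> - {0}) + ({0} \<union> range x_q) is \<tau>_A-open exactly when q \<in> A. So it suffices to find a
  chain of 2^\<lambda> subsets of a set of size at most \<frak>c. Well-order a set S of size \<lambda> and
  order its subsets lexicographically; then X \<mapsto> {N \<le>lex X | N has a greatest element} is
  strictly monotone. A set with greatest element a is given by a and a subset of the initial
  segment below a; that segment has fewer than \<lambda> elements, hence at most \<frak>c subsets.\<close>

lemma free_ultrafilter_on_mono: "free_ultrafilter_on F \<Longrightarrow> A \<in> F \<Longrightarrow> A \<subseteq> B \<Longrightarrow> B \<in> F"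
  unfolding free_ultrafilter_on_def by blast

lemma free_ultrafilter_on_Int: "free_ultrafilter_on F \<Longrightarrow> A \<in> F \<Longrightarrow> B \<in> F \<Longrightarrow> A \<inter> B \<in> F"
  unfolding free_ultrafilter_on_def by blast

lemma free_ultrafilter_on_UNIV: "free_ultrafilter_on F \<Longrightarrow> UNIV \<in> F"
  unfolding free_ultrafilter_on_def by blast

lemma free_ultrafilter_on_subset_singleton: "free_ultrafilter_on F \<Longrightarrow> A \<subseteq> {x} \<Longrightarrow> A \<notin> F"
  unfolding free_ultrafilter_on_def by blast

lemma free_ultrafilter_on_Compl_finite:
  assumes "free_ultrafilter_on F" "finite A"
  shows "- A \<in> F"
  using assms(2)
proof (induction A rule: finite_induct)
  case empty
  then show ?case using free_ultrafilter_on_UNIV[OF assms(1)] by simp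
next
  case (insert x A)
  have "- {x} \<in> F" using assms(1) unfolding free_ultrafilter_on_def by blast
  with insert have "- A \<inter> - {x} \<in> F" using free_ultrafilter_on_Int[OF assms(1)] by blast
  moreover have "- A \<inter> - {x} = - insert x A" by blast
  ultimately show ?case by simp
qed

section \<open>Topologies between \<tau>[F] and the Euclidean topology\<close>

lemma openin_topology_open_with_condition_at:
  fixes a :: "'a::topological_space"
  assumes "\<And>U V. P U \<Longrightarrow> U \<subseteq> V \<Longrightarrow> P V" and "\<And>U V. P U \<Longrightarrow> P V \<Longrightarrow> P (U \<inter> V)"
  shows "openin (topology (\<lambda>U. open U \<and> (a \<in> U \<longrightarrow> P U))) = (\<lambda>U. open U \<and> (a \<in> U \<longrightarrow> P U))"
proof (rule topology_inverse')
  have "P (\<Union>K)" if K: "\<forall>U\<in>K. open U \<and> (a \<in> U \<longrightarrow> P U)" and a: "a \<in> \<Union>K" for K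
  proof -
    obtain U where "U \<in> K" "a \<in> U" using a by blast
    then show ?thesis using K assms(1)[of U "\<Union>K"] by blast
  qed
  then show "istopology (\<lambda>U. open U \<and> (a \<in> U \<longrightarrow> P U))"
    unfolding istopology_def using assms(2) by (simp add: open_Int open_Union)
qed

lemma openin_tauF:
  assumes "free_ultrafilter_on F"
  shows "openin (tauF F) U \<longleftrightarrow> open U \<and> (0 \<in> U \<longrightarrow> {n. real_of_int n \<in> U} \<in> F)"
proof -
  have "tauF F = topology (\<lambda>U. open U \<and> (0 \<in> U \<longrightarrow> {n. real_of_int n \<in> U} \<in> F))"
    unfolding tauF_def imp_conv_disj ..
  also have "openin \<dots> = (\<lambda>U. open U \<and> (0 \<in> U \<longrightarrow> {n. real_of_int n \<in> U} \<in> F))"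
    by (rule openin_topology_open_with_condition_at)
      (auto simp: Collect_conj_eq intro: free_ultrafilter_on_mono[OF assms]
        free_ultrafilter_on_Int[OF assms])
  finally show ?thesis by simp
qed

lemma open_imp_openin_tauF: "free_ultrafilter_on F \<Longrightarrow> open U \<Longrightarrow> 0 \<notin> U \<Longrightarrow> openin (tauF F) U"
  by (simp add: openin_tauF)

lemma topspace_tauF:
  assumes "free_ultrafilter_on F"
  shows "topspace (tauF F) = UNIV"
proof -
  have "openin (tauF F) UNIV" by (simp add: openin_tauF[OF assms] free_ultrafilter_on_UNIV[OF assms])
  then show ?thesis using openin_subset by blast
qed

lemma finite_int_near: "finite {n::int. \<bar>real_of_int n - y\<bar> \<le> r}"
proof (rule finite_subset)
  show "{n::int. \<bar>real_of_int n - y\<bar> \<le> r} \<subseteq> {\<lfloor>y - r\<rfloor> .. \<lceil>y + r\<rceil>}"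
    by (auto simp: abs_le_iff floor_le_iff le_ceiling_iff)
qed simp

lemma tauF_separates_zero:
  assumes F: "free_ultrafilter_on F" and "y \<noteq> 0"
  shows "\<exists>U V. openin (tauF F) U \<and> openin (tauF F) V \<and> 0 \<in> U \<and> y \<in> V \<and> disjnt U V"
proof -
  define r where "r = \<bar>y\<bar> / 2"
  have "{n. real_of_int n \<in> - cball y r} = - {n. \<bar>real_of_int n - y\<bar> \<le> r}"
    by (auto simp: dist_real_def abs_minus_commute)
  then have "openin (tauF F) (- cball y r)"
    by (simp add: openin_tauF[OF F] free_ultrafilter_on_Compl_finite[OF F finite_int_near] open_Compl)
  moreover have "openin (tauF F) (ball y r - {0})"
    by (rule open_imp_openin_tauF[OF F]) auto
  ultimately show ?thesis
    using assms(2) by (intro exI[of _ "- cball y r"] exI[of _ "ball y r - {0}"])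
      (auto simp: r_def disjnt_def dist_real_def)
qed

lemma Hausdorff_space_tauF:
  assumes F: "free_ultrafilter_on F"
  shows "Hausdorff_space (tauF F)"
proof -
  have "\<exists>U V. openin (tauF F) U \<and> openin (tauF F) V \<and> x \<in> U \<and> y \<in> V \<and> disjnt U V"
    if xy: "x \<noteq> y" for x y
  proof -
    consider "x = 0" | "y = 0" | "x \<noteq> 0" "y \<noteq> 0" by blast
    then show ?thesis
    proof cases
      case 1
      then show ?thesis using tauF_separates_zero[OF F, of y] xy by blast
    next
      case 2
      then obtain U V where "openin (tauF F) U" "openin (tauF F) V" "y \<in> U" "x \<in> V" "disjnt U V"
        using tauF_separates_zero[OF F, of x] xy by blast
      then show ?thesis by (intro exI[of _ V] exI[of _ U]) (simp add: disjnt_sym)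
    next
      case 3
      define r where "r = dist x y / 2"
      have "openin (tauF F) (ball x r - {0})" "openin (tauF F) (ball y r - {0})"
        by (auto intro: open_imp_openin_tauF[OF F])
      moreover have "disjnt (ball x r) (ball y r)"
        unfolding disjnt_def r_def by (rule disjoint_ballI) simp
      ultimately show ?thesis
        using 3 xy by (intro exI[of _ "ball x r - {0}"] exI[of _ "ball y r - {0}"])
          (auto simp: r_def disjnt_def)
    qed
  qed
  then show ?thesis unfolding Hausdorff_space_def by blast
qed

lemma L0_if_between_tauF_euclidean:
  assumes F: "free_ultrafilter_on F"
    and lower: "topo_le (tauF F) \<tau>" and upper: "topo_le \<tau> euclidean"
  shows "\<tau> \<in> L0"
proof -
  have away_0: "openin \<tau> U" if "open U" "0 \<notin> U" for U
    using lower open_imp_openin_tauF[OF F that] unfolding topo_le_def by blast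
  have top: "topspace \<tau> = UNIV"
    using lower topspace_tauF[OF F] openin_topspace[of "tauF F"] openin_subset[of \<tau> UNIV]
    unfolding topo_le_def by auto
  have "Hausdorff_space \<tau>"
    using lower unfolding topo_le_def
    by (intro Hausdorff_space_expansive[OF Hausdorff_space_tauF[OF F]])
      (simp_all add: top topspace_tauF[OF F])
  moreover have "nbhds \<tau> a = nbhds euclidean a" if "a \<noteq> 0" for a
  proof
    show "nbhds \<tau> a \<subseteq> nbhds euclidean a"
      using upper unfolding nbhds_def topo_le_def by blast
    show "nbhds euclidean a \<subseteq> nbhds \<tau> a"
    proof
      fix V assume "V \<in> nbhds euclidean a"
      then obtain U where "open U" "a \<in> U" "U \<subseteq> V" by (auto simp: nbhds_def)
      then have "openin \<tau> (U - {0})" "a \<in> U - {0}" "U - {0} \<subseteq> V"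
        using away_0[of "U - {0}"] open_delete that by auto
      then show "V \<in> nbhds \<tau> a" unfolding nbhds_def by blast
    qed
  qed
  then have "C_set \<tau> \<subseteq> {0}" unfolding C_set_def by blast
  ultimately show ?thesis using top upper unfolding L0_def coarser_Hausdorff_def by blast
qed

section \<open>Null sequences with disjoint ranges\<close>

definition dyad :: "nat \<Rightarrow> real" where
  "dyad k = (1/2) ^ (k + 2)"

text \<open>For q \<in> [0,1) the k-th term lies in [dyad k, 2 dyad k), and these intervals are
  pairwise disjoint; so a term determines both k and q.\<close>
definition null_seq :: "real \<Rightarrow> nat \<Rightarrow> real" where
  "null_seq q k = dyad k + q * (dyad k)\<^sup>2"

lemma dyad_pos: "0 < dyad k"
  by (simp add: dyad_def)

lemma dyad_le_quarter: "dyad k \<le> 1/4"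
proof -
  have "(1/2::real) ^ (k + 2) \<le> (1/2) ^ 2" by (rule power_decreasing) auto
  then show ?thesis by (simp add: dyad_def power2_eq_square)
qed

lemma double_dyad_le: "k < j \<Longrightarrow> 2 * dyad j \<le> dyad k"
proof -
  assume "k < j"
  then have "(1/2::real) ^ (j + 2) \<le> (1/2) ^ (k + 3)" by (intro power_decreasing) auto
  moreover have "(1/2::real) ^ (k + 3) = (1/2) ^ (k + 2) / 2" by (simp add: power_add power3_eq_cube)
  ultimately show ?thesis by (simp add: dyad_def)
qed

lemma null_seq_bounds:
  assumes "q \<in> {0..<1}"
  shows "dyad k \<le> null_seq q k" and "null_seq q k < 2 * dyad k"
proof -
  have "q * (dyad k)\<^sup>2 \<le> (dyad k)\<^sup>2" using assms by (simp add: mult_left_le_one_le)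
  moreover have "(dyad k)\<^sup>2 < dyad k"
    using dyad_pos[of k] dyad_le_quarter[of k] by (simp add: power2_eq_square)
  ultimately show "dyad k \<le> null_seq q k" "null_seq q k < 2 * dyad k"
    using assms by (simp_all add: null_seq_def)
qed

lemma null_seq_pos: "q \<in> {0..<1} \<Longrightarrow> 0 < null_seq q k"
  using null_seq_bounds(1) dyad_pos by (rule order.strict_trans2[rotated])

lemma null_seq_less_half: "q \<in> {0..<1} \<Longrightarrow> null_seq q k < 1/2"
  using null_seq_bounds(2)[of q k] dyad_le_quarter[of k] by linarith

lemma null_seq_eq_imp_eq:
  assumes q: "q \<in> {0..<1}" "q' \<in> {0..<1}" and eq: "null_seq q k = null_seq q' j"
  shows "q = q'"
proof -
  have "k = j"
  proof (rule ccontr)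
    assume "k \<noteq> j"
    then consider "k < j" | "j < k" by linarith
    then show False
      using null_seq_bounds[OF q(1), of k] null_seq_bounds[OF q(2), of j] eq
        double_dyad_le[of k j] double_dyad_le[of j k] by cases linarith+
  qed
  then show ?thesis using eq dyad_pos[of k] by (simp add: null_seq_def)
qed

lemma null_seq_tendsto: "null_seq q \<longlonglongrightarrow> 0"
proof -
  have "dyad \<longlonglongrightarrow> 0"
    unfolding dyad_def by (subst power_add) (intro tendsto_mult_left_zero LIMSEQ_power_zero, simp)
  then have "(\<lambda>k. dyad k + q * (dyad k)\<^sup>2) \<longlonglongrightarrow> 0 + q * 0\<^sup>2"
    by (intro tendsto_intros)
  then show ?thesis by (simp add: null_seq_def[abs_def])
qed

definition nonzero_shifts :: "real \<Rightarrow> real set" where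
  "nonzero_shifts q = (\<Union>n\<in>of_int ` (- {0}). \<Union>x\<in>insert 0 (range (null_seq q)). {n + x})"

lemma closed_nonzero_shifts: "closed (nonzero_shifts q)"
  unfolding nonzero_shifts_def
  by (intro closed_compact_sums closed_of_int_image compact_sequence_with_limit null_seq_tendsto)

lemma of_int_add_eq_imp_eq:
  fixes x y :: real
  assumes "real_of_int n + x = real_of_int m + y" "0 \<le> x" "x < 1/2" "0 \<le> y" "y < 1/2"
  shows "n = m"
proof -
  have "\<bar>real_of_int (n - m)\<bar> < 1" using assms by simp
  then show ?thesis by linarith
qed

lemma shift_mem_nonzero_shifts_iff:
  assumes "0 \<le> x" "x < 1/2" "q \<in> {0..<1}"
  shows "real_of_int n + x \<in> nonzero_shifts q \<longleftrightarrow> n \<noteq> 0 \<and> x \<in> insert 0 (range (null_seq q))"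
proof
  assume "real_of_int n + x \<in> nonzero_shifts q"
  then obtain m y where my: "m \<noteq> 0" "y \<in> insert 0 (range (null_seq q))"
    "real_of_int n + x = real_of_int m + y"
    unfolding nonzero_shifts_def by blast
  moreover have "0 \<le> y" "y < 1/2"
    using my(2) null_seq_pos[OF assms(3)] null_seq_less_half[OF assms(3)] by (auto intro: less_imp_le)
  ultimately have "n = m" using assms of_int_add_eq_imp_eq by blast
  then show "n \<noteq> 0 \<and> x \<in> insert 0 (range (null_seq q))" using my by simp
qed (auto simp: nonzero_shifts_def)

section \<open>The topologies \<tau>_A\<close>

definition absorbs_shifts :: "int set set \<Rightarrow> real \<Rightarrow> real set \<Rightarrow> bool" where
  "absorbs_shifts F q U \<longleftrightarrow>
     {n. \<forall>\<^sub>F k in sequentially. real_of_int n + null_seq q k \<in> U} \<in> F"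

lemma absorbs_shifts_mono:
  "free_ultrafilter_on F \<Longrightarrow> absorbs_shifts F q U \<Longrightarrow> U \<subseteq> V \<Longrightarrow> absorbs_shifts F q V"
  unfolding absorbs_shifts_def by (erule free_ultrafilter_on_mono) (auto elim: eventually_mono)

lemma absorbs_shifts_Int:
  assumes "free_ultrafilter_on F" "absorbs_shifts F q U" "absorbs_shifts F q V"
  shows "absorbs_shifts F q (U \<inter> V)"
proof -
  have "{n. \<forall>\<^sub>F k in sequentially. real_of_int n + null_seq q k \<in> U \<inter> V} =
      {n. \<forall>\<^sub>F k in sequentially. real_of_int n + null_seq q k \<in> U} \<inter>
      {n. \<forall>\<^sub>F k in sequentially. real_of_int n + null_seq q k \<in> V}"
    by (auto simp: eventually_conj_iff)
  then show ?thesis using assms free_ultrafilter_on_Int unfolding absorbs_shifts_def by metis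
qed

definition tauA :: "int set set \<Rightarrow> real set \<Rightarrow> real topology" where
  "tauA F A = topology (\<lambda>U. open U \<and> (0 \<in> U \<longrightarrow> (\<forall>q \<in> {0..<1} - A. absorbs_shifts F q U)))"

lemma openin_tauA:
  assumes "free_ultrafilter_on F"
  shows "openin (tauA F A) U \<longleftrightarrow> open U \<and> (0 \<in> U \<longrightarrow> (\<forall>q \<in> {0..<1} - A. absorbs_shifts F q U))"
  unfolding tauA_def
  by (subst openin_topology_open_with_condition_at)
    (auto intro: absorbs_shifts_mono[OF assms] absorbs_shifts_Int[OF assms])

lemma tauF_le_tauA:
  assumes F: "free_ultrafilter_on F"
  shows "topo_le (tauF F) (tauA F A)"
  unfolding topo_le_def
proof (intro allI impI)
  fix U assume "openin (tauF F) U"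
  then have U: "open U" "0 \<in> U \<Longrightarrow> {n. real_of_int n \<in> U} \<in> F"
    by (auto simp: openin_tauF[OF F])
  have "{n. real_of_int n \<in> U} \<subseteq> {n. \<forall>\<^sub>F k in sequentially. real_of_int n + null_seq q k \<in> U}" for q
  proof clarify
    fix n assume "real_of_int n \<in> U"
    moreover have "(\<lambda>k. real_of_int n + null_seq q k) \<longlonglongrightarrow> real_of_int n + 0"
      by (intro tendsto_add tendsto_const null_seq_tendsto)
    ultimately show "\<forall>\<^sub>F k in sequentially. real_of_int n + null_seq q k \<in> U"
      using topological_tendstoD U(1) by fastforce
  qed
  then have "0 \<in> U \<Longrightarrow> absorbs_shifts F q U" for q
    unfolding absorbs_shifts_def using U(2) free_ultrafilter_on_mono[OF F] by blast
  then show "openin (tauA F A) U" by (simp add: openin_tauA[OF F] U(1))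
qed

lemma tauA_le_euclidean: "free_ultrafilter_on F \<Longrightarrow> topo_le (tauA F A) euclidean"
  by (simp add: topo_le_def openin_tauA)

lemma tauA_mono: "free_ultrafilter_on F \<Longrightarrow> A \<subseteq> B \<Longrightarrow> topo_le (tauA F A) (tauA F B)"
  unfolding topo_le_def by (auto simp: openin_tauA)

lemma shifted_null_seq_mem_nonzero_shifts_iff:
  assumes q: "q \<in> {0..<1}" "q' \<in> {0..<1}"
  shows "real_of_int n + null_seq q' k \<in> nonzero_shifts q \<longleftrightarrow> n \<noteq> 0 \<and> q' = q"
proof -
  have "null_seq q' k \<in> range (null_seq q) \<longleftrightarrow> q' = q"
  proof
    assume "null_seq q' k \<in> range (null_seq q)"
    then obtain j where "null_seq q' k = null_seq q j" by blast
    then show "q' = q" by (rule null_seq_eq_imp_eq[OF q(2,1)])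
  qed simp
  moreover have "null_seq q' k \<noteq> 0" using null_seq_pos[OF q(2), of k] by linarith
  ultimately show ?thesis
    using shift_mem_nonzero_shifts_iff[OF less_imp_le[OF null_seq_pos] null_seq_less_half q(1)] q(2)
    by simp
qed

lemma absorbs_shifts_Compl_nonzero_shifts_iff:
  assumes F: "free_ultrafilter_on F" and q: "q \<in> {0..<1}" "q' \<in> {0..<1}"
  shows "absorbs_shifts F q' (- nonzero_shifts q) \<longleftrightarrow> q' \<noteq> q"
proof -
  have "{n. \<forall>\<^sub>F k in sequentially. real_of_int n + null_seq q' k \<in> - nonzero_shifts q} =
      (if q' = q then {0} else UNIV)"
    by (auto simp: shifted_null_seq_mem_nonzero_shifts_iff[OF q])
  then show ?thesis
    unfolding absorbs_shifts_def
    using free_ultrafilter_on_UNIV[OF F] free_ultrafilter_on_subset_singleton[OF F, of "{0}"] by auto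
qed

lemma openin_tauA_Compl_nonzero_shifts_iff:
  assumes F: "free_ultrafilter_on F" and q: "q \<in> {0..<1}"
  shows "openin (tauA F A) (- nonzero_shifts q) \<longleftrightarrow> q \<in> A"
proof -
  have "0 \<notin> nonzero_shifts q" using shift_mem_nonzero_shifts_iff[of 0 q 0] q by simp
  then show ?thesis
    using q closed_nonzero_shifts[of q]
    by (auto simp: openin_tauA[OF F] absorbs_shifts_Compl_nonzero_shifts_iff[OF F q(1)] open_Compl)
qed

lemma inj_on_tauA:
  assumes "free_ultrafilter_on F"
  shows "inj_on (tauA F) (Pow {0..<1})"
proof (rule inj_onI)
  fix A B assume AB: "A \<in> Pow {0..<1}" "B \<in> Pow {0..<1}" and eq: "tauA F A = tauA F B"
  have "q \<in> A \<longleftrightarrow> q \<in> B" if "q \<in> {0..<1}" for q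
    using openin_tauA_Compl_nonzero_shifts_iff[OF assms that] eq by metis
  then show "A = B" using AB by blast
qed

lemma is_chain_topo_tauA_image:
  assumes "free_ultrafilter_on F" "chain\<^sub>\<subseteq> C"
  shows "is_chain_topo (tauA F ` C)"
  unfolding is_chain_topo_def
proof (intro ballI)
  fix \<sigma> \<tau> assume "\<sigma> \<in> tauA F ` C" "\<tau> \<in> tauA F ` C"
  then obtain A B where "A \<in> C" "B \<in> C" "\<sigma> = tauA F A" "\<tau> = tauA F B" by blast
  then show "topo_le \<sigma> \<tau> \<or> topo_le \<tau> \<sigma>"
    using assms(2) tauA_mono[OF assms(1)] unfolding chain_subset_def by metis
qed

section \<open>Long chains of sets\<close>

definition lex_le :: "'a rel \<Rightarrow> 'a set \<Rightarrow> 'a set \<Rightarrow> bool" where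
  "lex_le r X Y \<longleftrightarrow> X = Y \<or> (\<exists>m \<in> Y - X. X \<inter> underS r m = Y \<inter> underS r m)"

lemma Well_order_obtains_least:
  assumes "Well_order r" "D \<subseteq> Field r" "D \<noteq> {}"
  obtains m where "m \<in> D" "\<And>z. z \<in> D \<Longrightarrow> (m, z) \<in> r"
  using wo_rel.minim_in[of r D] wo_rel.minim_least[of r D] assms by (auto simp: wo_rel_def)

lemma lex_le_total:
  assumes wo: "Well_order r" and "X \<subseteq> Field r" "Y \<subseteq> Field r"
  shows "lex_le r X Y \<or> lex_le r Y X"
proof (cases "X = Y")
  case False
  obtain m where m: "m \<in> (X - Y) \<union> (Y - X)" and least: "\<And>z. z \<in> (X - Y) \<union> (Y - X) \<Longrightarrow> (m, z) \<in> r"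
    using Well_order_obtains_least[OF wo, of "(X - Y) \<union> (Y - X)"] assms False by blast
  have "X \<inter> underS r m = Y \<inter> underS r m"
    using least wo_rel.ANTISYM[of r] wo unfolding underS_def antisym_def wo_rel_def by blast
  then show ?thesis using m unfolding lex_le_def by blast
qed (simp add: lex_le_def)

lemma lex_le_trans:
  assumes wo: "Well_order r" and "X \<subseteq> Field r" "Y \<subseteq> Field r" "Z \<subseteq> Field r"
    and XY: "lex_le r X Y" and YZ: "lex_le r Y Z"
  shows "lex_le r X Z"
proof (cases "X = Y \<or> Y = Z")
  case False
  obtain m1 where m1: "m1 \<in> Y - X" "X \<inter> underS r m1 = Y \<inter> underS r m1"
    using XY False unfolding lex_le_def by blast
  obtain m2 where m2: "m2 \<in> Z - Y" "Y \<inter> underS r m2 = Z \<inter> underS r m2"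
    using YZ False unfolding lex_le_def by blast
  have "m1 \<noteq> m2" using m1 m2 by blast
  have incr: "underS r a \<subseteq> underS r b" "a \<in> underS r b" if "(a, b) \<in> r" "a \<noteq> b" for a b
    using underS_incr[OF wo_rel.TRANS wo_rel.ANTISYM that(1)] wo that
    by (auto simp: underS_def wo_rel_def)
  have "m1 \<in> Field r" "m2 \<in> Field r" using m1 m2 assms(3,4) by auto
  then consider "(m1, m2) \<in> r" | "(m2, m1) \<in> r"
    using wo_rel.TOTALS[of r] wo unfolding wo_rel_def by blast
  then show ?thesis
  proof cases
    case 1
    with incr[OF 1 \<open>m1 \<noteq> m2\<close>] show ?thesis using m1 m2 unfolding lex_le_def by blast
  next
    case 2
    with incr[OF 2 \<open>m1 \<noteq> m2\<close>[symmetric]] show ?thesis using m1 m2 unfolding lex_le_def by blast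
  qed
qed (use XY YZ in auto)

lemma subset_imp_lex_le:
  assumes wo: "Well_order r" and "Y \<subseteq> Field r" "N \<subseteq> Y"
  shows "lex_le r N Y"
proof (cases "N = Y")
  case False
  obtain m where m: "m \<in> Y - N" and least: "\<And>z. z \<in> Y - N \<Longrightarrow> (m, z) \<in> r"
    using Well_order_obtains_least[OF wo, of "Y - N"] assms False by blast
  have "N \<inter> underS r m = Y \<inter> underS r m"
    using least wo_rel.ANTISYM[of r] wo assms(3) unfolding underS_def antisym_def wo_rel_def by blast
  then show ?thesis using m unfolding lex_le_def by blast
qed (simp add: lex_le_def)

text \<open>A set with greatest element a is the node at height a of the binary tree
  2^<\<lambda>: its indicator restricted to the segment up to a.\<close>
definition nodes :: "'a rel \<Rightarrow> 'a set set" where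
  "nodes r = {N. \<exists>a \<in> N. N \<subseteq> under r a}"

definition lex_below :: "'a rel \<Rightarrow> 'a set \<Rightarrow> 'a set set" where
  "lex_below r X = {N \<in> nodes r. lex_le r N X}"

lemma nodes_subset_Field:
  assumes "N \<in> nodes r"
  shows "N \<subseteq> Field r"
proof -
  obtain a where "N \<subseteq> under r a" using assms unfolding nodes_def by blast
  then show ?thesis using under_Field[of r a] by blast
qed

lemma lex_below_mono:
  assumes "Well_order r" "X \<subseteq> Field r" "Y \<subseteq> Field r" "lex_le r X Y"
  shows "lex_below r X \<subseteq> lex_below r Y"
  using lex_le_trans[OF assms(1) nodes_subset_Field assms(2,3) _ assms(4)]
  unfolding lex_below_def by blast

text \<open>The node {m} \<union> (X \<inter> underS m), where m is the first point of Y - X, separates X from Y.\<close>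
lemma lex_below_neq:
  assumes wo: "Well_order r" and "X \<subseteq> Field r" "Y \<subseteq> Field r" "lex_le r X Y" "X \<noteq> Y"
  shows "lex_below r X \<noteq> lex_below r Y"
proof -
  obtain m where m: "m \<in> Y - X" "X \<inter> underS r m = Y \<inter> underS r m"
    using assms(4,5) unfolding lex_le_def by blast
  define N where "N = insert m (X \<inter> underS r m)"
  have "m \<in> Field r" using m assms(3) by blast
  then have "(m, m) \<in> r" using wo_rel.REFL[of r] wo unfolding wo_rel_def by (simp add: refl_on_def)
  then have "N \<in> nodes r" unfolding nodes_def N_def under_def underS_def by blast
  moreover have "N \<subseteq> Y" using m unfolding N_def by blast
  then have "lex_le r N Y" by (rule subset_imp_lex_le[OF wo assms(3)])
  moreover have "\<not> lex_le r N X"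
  proof
    assume "lex_le r N X"
    moreover have "N \<noteq> X" using m unfolding N_def by blast
    ultimately obtain m' where m': "m' \<in> X - N" "N \<inter> underS r m' = X \<inter> underS r m'"
      unfolding lex_le_def by blast
    have "m' \<noteq> m" "m' \<in> Field r" using m m' assms(2) by auto
    then consider "m' \<in> underS r m" | "m \<in> underS r m'"
      using wo_rel.TOTALS[of r] wo \<open>m \<in> Field r\<close> unfolding underS_def wo_rel_def by blast
    then show False
    proof cases
      case 1
      then show False using m'(1) unfolding N_def by blast
    next
      case 2
      then have "m \<in> N \<inter> underS r m'" unfolding N_def by blast
      then show False using m'(2) m(1) by blast
    qed
  qed
  ultimately show ?thesis unfolding lex_below_def by blast
qed

lemma inj_on_lex_below:
  assumes "Well_order r"
  shows "inj_on (lex_below r) (Pow (Field r))"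
proof (rule inj_onI)
  fix X Y assume "X \<in> Pow (Field r)" "Y \<in> Pow (Field r)" "lex_below r X = lex_below r Y"
  then show "X = Y"
    using lex_below_neq[OF assms, of X Y] lex_below_neq[OF assms, of Y X] lex_le_total[OF assms, of X Y]
    by auto
qed

lemma chain_subset_lex_below:
  assumes "Well_order r"
  shows "chain\<^sub>\<subseteq> (lex_below r ` Pow (Field r))"
  unfolding chain_subset_def using lex_le_total[OF assms] lex_below_mono[OF assms] by blast

lemma Well_order_chain_eqpoll_Pow:
  assumes "Well_order r"
  shows "\<exists>C \<subseteq> Pow (nodes r). chain\<^sub>\<subseteq> C \<and> C \<approx> Pow (Field r)"
proof (intro exI conjI)
  show "lex_below r ` Pow (Field r) \<subseteq> Pow (nodes r)" unfolding lex_below_def by blast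
  show "chain\<^sub>\<subseteq> (lex_below r ` Pow (Field r))" by (rule chain_subset_lex_below[OF assms])
  show "lex_below r ` Pow (Field r) \<approx> Pow (Field r)"
    by (rule inj_on_image_eqpoll_self[OF inj_on_lex_below[OF assms]])
qed

lemma chain_subset_transfer:
  assumes "C \<subseteq> Pow A" "chain\<^sub>\<subseteq> C" "A \<lesssim> T"
  shows "\<exists>D \<subseteq> Pow T. chain\<^sub>\<subseteq> D \<and> D \<approx> C"
proof -
  obtain e where e: "inj_on e A" "e ` A \<subseteq> T" using assms(3) unfolding lepoll_def by blast
  have "inj_on (image e) C"
  proof (rule inj_onI)
    fix X Y assume "X \<in> C" "Y \<in> C" "e ` X = e ` Y"
    then show "X = Y" using inj_on_image_eq_iff[OF e(1)] assms(1) by blast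
  qed
  then have "image e ` C \<approx> C" by (rule inj_on_image_eqpoll_self)
  moreover have "chain\<^sub>\<subseteq> (image e ` C)" unfolding chain_subset_def
  proof (intro ballI)
    fix X' Y' assume "X' \<in> image e ` C" "Y' \<in> image e ` C"
    then obtain X Y where "X \<in> C" "Y \<in> C" "X' = e ` X" "Y' = e ` Y" by blast
    then show "X' \<subseteq> Y' \<or> Y' \<subseteq> X'" using assms(2) unfolding chain_subset_def by (metis image_mono)
  qed
  moreover have "image e ` C \<subseteq> Pow T" using assms(1) e(2) by blast
  ultimately show ?thesis by blast
qed

lemma nodes_subset_image: "nodes r \<subseteq> (\<lambda>(a, T). insert a T) ` (SIGMA a:Field r. Pow (underS r a))"
proof
  fix N assume "N \<in> nodes r"
  then obtain a where a: "a \<in> N" "N \<subseteq> under r a" unfolding nodes_def by blast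
  then have "a \<in> Field r" "N - {a} \<subseteq> underS r a"
    unfolding under_def underS_def Field_def by auto
  moreover have "N = insert a (N - {a})" using a(1) by blast
  ultimately show "N \<in> (\<lambda>(a, T). insert a T) ` (SIGMA a:Field r. Pow (underS r a))"
    by (intro image_eqI[of _ _ "(a, N - {a})"]) auto
qed

context
  includes cardinal_syntax
begin

lemma underS_card_of_lesspoll:
  assumes "a \<in> S"
  shows "underS |S| a \<prec> S"
proof -
  have less: "|underS |S| a| <o |S|"
    by (rule card_of_underS[OF card_of_Card_order]) (simp add: Field_card_of assms)
  then have "|underS |S| a| \<le>o |S|" by (rule ordLess_imp_ordLeq)
  then have "underS |S| a \<lesssim> S" unfolding lepoll_def by (simp only: card_of_ordLeq[symmetric])
  moreover have "\<not> underS |S| a \<approx> S"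
    unfolding eqpoll_iff_card_of_ordIso by (rule not_ordLess_ordIso[OF less])
  ultimately show ?thesis unfolding lesspoll_def by blast
qed

lemma reals_times_reals_lepoll: "(UNIV::real set) \<times> (UNIV::real set) \<lesssim> (UNIV::real set)"
  using card_of_Times_same_infinite[OF infinite_UNIV_char_0] eqpoll_iff_card_of_ordIso
    eqpoll_imp_lepoll by blast

lemma nodes_card_of_lepoll_reals:
  assumes "lambda_set S"
  shows "nodes |S| \<lesssim> (UNIV::real set)"
proof -
  have "nodes |S| \<lesssim> (\<lambda>(a, T). insert a T) ` (SIGMA a:S. Pow (underS |S| a))"
    using nodes_subset_image[of "|S|"] unfolding Field_card_of by (rule subset_imp_lepoll)
  also have "\<dots> \<lesssim> (SIGMA a:S. Pow (underS |S| a))"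
    by (rule image_lepoll)
  also have "\<dots> \<lesssim> (UNIV::real set) \<times> (UNIV::real set)"
  proof (rule Sigma_lepoll_mono)
    fix a assume "a \<in> S"
    then have "underS |S| a \<prec> S" by (rule underS_card_of_lesspoll)
    then show "Pow (underS |S| a) \<lesssim> (UNIV::real set)"
      using assms unfolding lambda_set_def by simp
  qed simp
  also have "\<dots> \<lesssim> (UNIV::real set)"
    by (rule reals_times_reals_lepoll)
  finally show ?thesis .
qed

end

theorem theorem9:
  fixes F :: "int set set" and S :: "real set"
  assumes "free_ultrafilter_on F"
    and "lambda_set S"
  shows "\<exists>K. K \<subseteq> L0 \<and> is_chain_topo K \<and> K \<approx> Pow S \<and> (\<forall>\<tau>\<in>K. topo_le (tauF F) \<tau>)"
proof -
  note F = assms(1)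
  obtain C0 where C0: "C0 \<subseteq> Pow (nodes (card_of S))" "chain\<^sub>\<subseteq> C0" "C0 \<approx> Pow S"
    using Well_order_chain_eqpoll_Pow[OF card_of_Well_order] unfolding Field_card_of by blast
  have "nodes (card_of S) \<lesssim> {0..<1::real}"
    using nodes_card_of_lepoll_reals[OF assms(2)] reals_lepoll_reals01 by (rule lepoll_trans)
  then obtain C where C: "C \<subseteq> Pow {0..<1::real}" "chain\<^sub>\<subseteq> C" "C \<approx> C0"
    using chain_subset_transfer[OF C0(1,2)] by blast
  define K where "K = tauA F ` C"
  have "K \<subseteq> L0"
    unfolding K_def
    using L0_if_between_tauF_euclidean[OF F tauF_le_tauA[OF F] tauA_le_euclidean[OF F]] by blast
  moreover have "is_chain_topo K"
    unfolding K_def by (rule is_chain_topo_tauA_image[OF F C(2)])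
  moreover have "K \<approx> Pow S"
    using inj_on_image_eqpoll_self[OF inj_on_subset[OF inj_on_tauA[OF F] C(1)]]
      eqpoll_trans[OF C(3) C0(3)]
    unfolding K_def by (rule eqpoll_trans)
  moreover have "\<forall>\<tau>\<in>K. topo_le (tauF F) \<tau>"
    unfolding K_def using tauF_le_tauA[OF F] by blast
  ultimately show ?thesis by (intro exI[of _ K]) simp
qed

end
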